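(* Let $V$ be a real Hilbert space, $\mathcal D$ a dictionary, $V_n\subset V$ a subspace of dimension $n$ with orthonormal basis $\Phi=(\phi_1,\dots,\phi_n)$, and $\kappa\in(0,1)$. Let $(W_m)_{m\ge0}$ be generated by the collective OMP algorithm with parameter $\kappa$. Then for every $\Psi=(\psi_1,\dots,\psi_n)\in V^n$, $$r_m\le4\frac{\|\Psi\|_{\ell^1(\mathcal D)}^2}{\kappa^2}(m+1)^{-1}+\|\Phi-\Psi\|^2\qquad\text{for all }m\ge1,$$ where $\|\Phi-\Psi\|^2=\sum_{i=1}^n\|\phi_i-\psi_i\|^2$.
   Context: A dictionary is a set $\mathcal D\subset V$ of elements with $\|\omega\|=1$ for all $\omega\in\mathcal D$ whose finite linear combinations are dense in $V$. Collective OMP: $W_0=\{0\}$; for $k\ge1$, choose $\omega_k\in\mathcal D$ with $$\sum_{i=1}^n|\langle\phi_i-P_{W_{k-1}}\phi_i,\omega_k\rangle|^2\ge\kappa^2\sup_{\omega\in\mathcal D}\sum_{i=1}^n|\langle\phi_i-P_{W_{k-1}}\phi_i,\omega\rangle|^2,$$ and set $W_k=\operatorname{span}\{\omega_1,\dots,\omega_k\}$ ($P_X$ is the orthogonal projection onto $X$). The residual is $r_m=\sum_{i=1}^n\|\phi_i-P_{W_m}\phi_i\|^2$. For $\Psi\in V^n$, $\|\Psi\|_{\ell^1(\mathcal D)}=\inf\{\sum_{\omega\in\mathcal D}\|c_\omega\|_2:\psi_i=\sum_{\omega\in\mathcal D}c_{\omega,i}\,\omega,\ i=1,\dots,n\}$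 with $c_\omega\in\mathbb R^n$ (countably many nonzero; infimum of the empty set is $+\infty$). *)

theory Defs
  imports "HOL-Analysis.Analysis"
begin

definition orth_proj :: "'a::real_inner set \<Rightarrow> 'a \<Rightarrow> 'a" where
  "orth_proj X x = (THE p. p \<in> X \<and> (\<forall>w\<in>X. inner (x - p) w = 0))"

definition dictionary :: "'a::real_normed_vector set \<Rightarrow> bool" where
  "dictionary D \<longleftrightarrow> (\<forall>w\<in>D. norm w = 1) \<and> closure (span D) = UNIV"

definition omp_space :: "(nat \<Rightarrow> 'a::real_vector) \<Rightarrow> nat \<Rightarrow> 'a set" where
  "omp_space om k = span (om ` {1..k})"

definition collective_omp ::
  "'a::real_inner set \<Rightarrow> real \<Rightarrow> nat \<Rightarrow> (nat \<Rightarrow> 'a) \<Rightarrow> (nat \<Rightarrow> 'a) \<Rightarrow> bool" where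
  "collective_omp D \<kappa> n phi om \<longleftrightarrow>
     (\<forall>k\<ge>1. om k \<in> D \<and>
        (\<Sum>i<n. (inner (phi i - orth_proj (omp_space om (k-1)) (phi i)) (om k))\<^sup>2)
          \<ge> \<kappa>\<^sup>2 * (SUP w\<in>D. \<Sum>i<n. (inner (phi i - orth_proj (omp_space om (k-1)) (phi i)) w)\<^sup>2))"

definition omp_residual :: "nat \<Rightarrow> (nat \<Rightarrow> 'a::real_inner) \<Rightarrow> (nat \<Rightarrow> 'a) \<Rightarrow> nat \<Rightarrow> real" where
  "omp_residual n phi om m = (\<Sum>i<n. (norm (phi i - orth_proj (omp_space om m) (phi i)))\<^sup>2)"

text \<open>The l1(D) norm of psi_0..psi_{n-1}: infimum of sum over D of the Euclidean norms of the
  coefficient vectors c_w in R^n, over all representations psi_i = sum_w c_{w,i} w with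
  countably many nonzero c_w (Inf of the empty set is top).\<close>
definition l1_dict_norm :: "'a::real_normed_vector set \<Rightarrow> nat \<Rightarrow> (nat \<Rightarrow> 'a) \<Rightarrow> ennreal" where
  "l1_dict_norm D n psi = Inf { (\<Sum>\<^sub>\<infinity>w\<in>D. ennreal (sqrt (\<Sum>i<n. (c w i)\<^sup>2))) | c.
       countable {w\<in>D. \<exists>i<n. c w i \<noteq> 0} \<and>
       (\<forall>i<n. ((\<lambda>w. c w i *\<^sub>R w) has_sum psi i) D) }"

end

theory Submission
  imports Defs
begin

text \<open>Write \<open>e\<^sub>i = \<phi>\<^sub>i - P\<^sub>W\<^sub>k \<phi>\<^sub>i\<close> and \<open>S\<^sub>k = sup\<^sub>\<omega>\<^sub>\<in>\<^sub>D \<Sum>\<^sub>i \<langle>e\<^sub>i, \<omega>\<rangle>\<^sup>2\<close>. Comparing \<open>W\<^sub>k\<^sub>+\<^sub>1\<close> with the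
  competitor \<open>P\<^sub>W\<^sub>k \<phi>\<^sub>i + \<langle>e\<^sub>i, \<omega>\<^sub>k\<^sub>+\<^sub>1\<rangle> \<omega>\<^sub>k\<^sub>+\<^sub>1\<close> and using the weak greedy choice gives
  \<open>r\<^sub>k\<^sub>+\<^sub>1 \<le> r\<^sub>k - \<kappa>\<^sup>2 S\<^sub>k\<close>. Since \<open>e\<^sub>i \<bottom> W\<^sub>k\<close>, we have
  \<open>r\<^sub>k = \<Sum>\<^sub>i \<langle>e\<^sub>i, \<phi>\<^sub>i - \<psi>\<^sub>i\<rangle> + \<Sum>\<^sub>i \<langle>e\<^sub>i, \<psi>\<^sub>i\<rangle> \<le> (r\<^sub>k + \<parallel>\<Phi> - \<Psi>\<parallel>\<^sup>2)/2 + M \<surd>S\<^sub>k\<close> for every representation of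
  \<open>\<Psi>\<close> over \<open>D\<close> of \<open>\<ell>\<^sup>1\<close> mass \<open>M\<close>, so \<open>a\<^sub>k = r\<^sub>k - \<parallel>\<Phi> - \<Psi>\<parallel>\<^sup>2\<close> satisfies \<open>a\<^sub>k \<le> 2 M \<surd>S\<^sub>k\<close>.
  Hence \<open>a\<^sub>k\<^sub>+\<^sub>1 \<le> a\<^sub>k - \<kappa>\<^sup>2 a\<^sub>k\<^sup>2 / (4 M\<^sup>2)\<close> whenever \<open>a\<^sub>k > 0\<close>, and this recursion forces
  \<open>a\<^sub>m \<le> 4 M\<^sup>2 / (\<kappa>\<^sup>2 (m + 1))\<close>. Finally let \<open>M\<close> decrease to \<open>\<parallel>\<Psi>\<parallel>\<^sub>\<ell>\<^sub>1\<^sub>(\<^sub>D\<^sub>)\<close>.\<close>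

lemma orthogonal_decomposition_span:
  fixes S :: "'a::real_inner set"
  assumes "finite S"
  shows "\<exists>p\<in>span S. \<forall>w\<in>span S. inner (x - p) w = 0"
  using assms
proof (induction S arbitrary: x rule: finite_induct)
  case empty
  show ?case by (intro bexI[of _ 0]) (auto simp: span_zero)
next
  case (insert a S)
  obtain pa where pa: "pa \<in> span S" "\<forall>w\<in>span S. inner (a - pa) w = 0"
    using insert.IH by blast
  obtain px where px: "px \<in> span S" "\<forall>w\<in>span S. inner (x - px) w = 0"
    using insert.IH by blast
  define u where "u = a - pa"
  define p where "p = px + (inner x u / inner u u) *\<^sub>R u"
  have sub: "span S \<subseteq> span (insert a S)"
    by (simp add: span_mono subset_insertI)
  have "u \<in> span (insert a S)"
    unfolding u_def using pa(1) sub span_base[of a "insert a S"] by (intro span_diff) auto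
  then have p_span: "p \<in> span (insert a S)"
    unfolding p_def using px(1) sub by (intro span_add span_scale) auto
  have u_orth: "inner u y = 0" if "y \<in> span S" for y
    using pa(2) that unfolding u_def by blast
  have orth_S: "inner (x - p) y = 0" if "y \<in> span S" for y
  proof -
    have "inner (x - p) y = inner (x - px) y - (inner x u / inner u u) * inner u y"
      by (simp add: p_def inner_diff_left inner_add_left)
    then show ?thesis using px(2) u_orth that by simp
  qed
  \<comment> \<open>When \<open>a \<in> span S\<close> we have \<open>u = 0\<close>, and the junk value of \<open>0 / 0\<close> makes \<open>p = px\<close>.\<close>
  have orth_u: "inner (x - p) u = 0"
  proof -
    have "inner (x - p) u = inner x u - inner px u - (inner x u / inner u u) * inner u u"
      by (simp add: p_def inner_diff_left inner_add_left)
    moreover have "inner px u = 0" using u_orth[OF px(1)] by (simp add: inner_commute)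
    ultimately show ?thesis by (cases "u = 0") simp_all
  qed
  have "inner (x - p) a = inner (x - p) u + inner (x - p) pa"
    by (simp add: u_def inner_diff_right)
  then have orth_a: "inner (x - p) a = 0"
    using orth_u orth_S[OF pa(1)] by simp
  have "inner (x - p) w = 0" if "w \<in> span (insert a S)" for w
  proof -
    have "orthogonal (x - p) y" if "y \<in> insert a S" for y
      using that orth_a orth_S[OF span_base] by (auto simp: orthogonal_def)
    then show ?thesis
      using orthogonal_to_span[OF \<open>w \<in> span (insert a S)\<close>] by (simp add: orthogonal_def)
  qed
  then show ?case using p_span by blast
qed

lemma orth_proj_span:
  fixes S :: "'a::real_inner set"
  assumes "finite S"
  shows orth_proj_in_span: "orth_proj (span S) x \<in> span S"
    and orth_proj_orthogonal: "w \<in> span S \<Longrightarrow> inner (x - orth_proj (span S) x) w = 0"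
proof -
  obtain p where p: "p \<in> span S" "\<forall>w\<in>span S. inner (x - p) w = 0"
    using orthogonal_decomposition_span[OF assms] by blast
  have "q = p" if q: "q \<in> span S" "\<forall>w\<in>span S. inner (x - q) w = 0" for q
  proof -
    have pq: "p - q \<in> span S" using p(1) q(1) by (rule span_diff)
    have "inner (p - q) (p - q) = inner (x - q) (p - q) - inner (x - p) (p - q)"
      by (simp add: inner_diff_left)
    also have "\<dots> = 0" using p(2) q(2) pq by simp
    finally show ?thesis by simp
  qed
  then have "orth_proj (span S) x = p"
    unfolding orth_proj_def using p by (intro the_equality) blast+
  with p show "orth_proj (span S) x \<in> span S" "w \<in> span S \<Longrightarrow> inner (x - orth_proj (span S) x) w = 0"
    by auto
qed

lemma orth_proj_span_dist_le:
  fixes S :: "'a::real_inner set"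
  assumes "finite S" and "y \<in> span S"
  shows "(norm (x - orth_proj (span S) x))\<^sup>2 \<le> (norm (x - y))\<^sup>2"
proof -
  let ?p = "orth_proj (span S) x"
  have "?p - y \<in> span S"
    using orth_proj_in_span[OF assms(1)] assms(2) by (rule span_diff)
  then have "orthogonal (x - ?p) (?p - y)"
    using orth_proj_orthogonal[OF assms(1)] by (simp add: orthogonal_def)
  then have "(norm (x - y))\<^sup>2 = (norm (x - ?p))\<^sup>2 + (norm (?p - y))\<^sup>2"
    using norm_add_Pythagorean[of "x - ?p" "?p - y"] by simp
  then show ?thesis by simp
qed

lemma norm_diff_component_unit:
  fixes e w :: "'a::real_inner"
  assumes "norm w = 1"
  shows "(norm (e - inner e w *\<^sub>R w))\<^sup>2 = (norm e)\<^sup>2 - (inner e w)\<^sup>2"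
proof -
  have "inner w w = 1" using assms by (simp add: norm_eq_1)
  then show ?thesis
    unfolding power2_norm_eq_inner
    by (simp add: inner_diff_left inner_diff_right inner_commute power2_eq_square)
qed

lemma two_inner_le_sum_squares:
  fixes a b :: "'a::real_inner"
  shows "2 * inner a b \<le> (norm a)\<^sup>2 + (norm b)\<^sup>2"
proof -
  have "0 \<le> (norm (a - b))\<^sup>2" by simp
  also have "\<dots> = (norm a)\<^sup>2 + (norm b)\<^sup>2 - 2 * inner a b"
    by (simp add: power2_norm_eq_inner inner_diff_left inner_diff_right inner_commute)
  finally show ?thesis by simp
qed

lemma has_sum_sum:
  fixes f :: "'i \<Rightarrow> 'b \<Rightarrow> 'c::topological_comm_monoid_add"
  assumes "finite I" and "\<And>i. i \<in> I \<Longrightarrow> (f i has_sum s i) A"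
  shows "((\<lambda>x. \<Sum>i\<in>I. f i x) has_sum (\<Sum>i\<in>I. s i)) A"
  using assms by (induction I rule: finite_induct) (auto intro: has_sum_add)

lemma sum_le_of_infsum_ennreal_le:
  fixes f :: "'b \<Rightarrow> real"
  assumes "(\<Sum>\<^sub>\<infinity>x\<in>A. ennreal (f x)) \<le> ennreal M" and "M \<ge> 0"
    and "\<And>x. x \<in> A \<Longrightarrow> f x \<ge> 0" and "finite F" and "F \<subseteq> A"
  shows "sum f F \<le> M"
proof -
  have "ennreal (sum f F) = (\<Sum>\<^sub>\<infinity>x\<in>F. ennreal (f x))"
    using assms(3-5) by (subst sum_ennreal[symmetric]) auto
  also have "\<dots> \<le> (\<Sum>\<^sub>\<infinity>x\<in>A. ennreal (f x))"
    using assms(5) by (intro infsum_mono_neutral nonneg_summable_on_complete) auto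
  also have "\<dots> \<le> ennreal M" by fact
  finally show ?thesis using assms(2) by (simp add: ennreal_le_iff)
qed

definition max_correlation :: "'a::real_inner set \<Rightarrow> nat \<Rightarrow> (nat \<Rightarrow> 'a) \<Rightarrow> real" where
  "max_correlation D n e = (SUP w\<in>D. \<Sum>i<n. (inner (e i) w)\<^sup>2)"

lemma correlation_le_max_correlation:
  fixes D :: "'a::real_inner set"
  assumes unit: "\<forall>w\<in>D. norm w = 1" and "w \<in> D"
  shows "(\<Sum>i<n. (inner (e i) w)\<^sup>2) \<le> max_correlation D n e"
  unfolding max_correlation_def
proof (rule cSUP_upper[OF \<open>w \<in> D\<close>], rule bdd_aboveI2)
  fix v assume "v \<in> D"
  then have "(inner (e i) v)\<^sup>2 \<le> (norm (e i))\<^sup>2" for i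
    using Cauchy_Schwarz_ineq2[of "e i" v] unit power_mono[of "\<bar>inner (e i) v\<bar>" "norm (e i)" 2]
    by simp
  then show "(\<Sum>i<n. (inner (e i) v)\<^sup>2) \<le> (\<Sum>i<n. (norm (e i))\<^sup>2)"
    by (intro sum_mono)
qed

lemma max_correlation_nonneg:
  fixes D :: "'a::real_inner set"
  assumes "\<forall>w\<in>D. norm w = 1" and "D \<noteq> {}"
  shows "0 \<le> max_correlation D n e"
proof -
  obtain w where "w \<in> D" using assms(2) by blast
  have "0 \<le> (\<Sum>i<n. (inner (e i) w)\<^sup>2)" by (simp add: sum_nonneg)
  also have "\<dots> \<le> max_correlation D n e"
    using correlation_le_max_correlation[OF assms(1) \<open>w \<in> D\<close>] .
  finally show ?thesis .
qed

lemma sum_inner_le_l1_max_correlation: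
  fixes D :: "'a::real_inner set" and e psi :: "nat \<Rightarrow> 'a" and c :: "'a \<Rightarrow> nat \<Rightarrow> real"
  assumes unit: "\<forall>w\<in>D. norm w = 1" and "D \<noteq> {}"
    and rep: "\<And>i. i < n \<Longrightarrow> ((\<lambda>w. c w i *\<^sub>R w) has_sum psi i) D"
    and l1: "(\<Sum>\<^sub>\<infinity>w\<in>D. ennreal (sqrt (\<Sum>i<n. (c w i)\<^sup>2))) \<le> ennreal M" and "M \<ge> 0"
  shows "(\<Sum>i<n. inner (e i) (psi i)) \<le> M * sqrt (max_correlation D n e)"
proof -
  define S where "S = max_correlation D n e"
  define L where "L w = sqrt (\<Sum>i<n. (c w i)\<^sup>2)" for w
  define g where "g w = (\<Sum>i<n. c w i * inner (e i) w)" for w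
  have "(g has_sum (\<Sum>i<n. inner (e i) (psi i))) D"
    unfolding g_def
    by (intro has_sum_sum) (use has_sum_bounded_linear[OF bounded_linear_inner_right rep] in auto)
  moreover have "sum g F \<le> M * sqrt S" if F: "finite F" "F \<subseteq> D" for F
  proof -
    have "g w \<le> L w * sqrt S" if "w \<in> D" for w
    proof -
      have "g w \<le> (\<Sum>i<n. \<bar>c w i\<bar> * \<bar>inner (e i) w\<bar>)"
        unfolding g_def by (intro sum_mono) (simp add: abs_mult[symmetric])
      also have "\<dots> \<le> L2_set (c w) {..<n} * L2_set (\<lambda>i. inner (e i) w) {..<n}"
        by (rule L2_set_mult_ineq)
      also have "\<dots> \<le> L w * sqrt S"
        unfolding L_def L2_set_def S_def
        using correlation_le_max_correlation[OF unit that]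
        by (intro mult_left_mono real_sqrt_le_mono) (auto intro: sum_nonneg)
      finally show ?thesis .
    qed
    then have "sum g F \<le> sum L F * sqrt S"
      unfolding sum_distrib_right using F by (intro sum_mono) auto
    also have "\<dots> \<le> M * sqrt S"
    proof (rule mult_right_mono)
      show "sum L F \<le> M"
        using sum_le_of_infsum_ennreal_le[OF l1[folded L_def] \<open>M \<ge> 0\<close> _ F]
        by (simp add: L_def sum_nonneg)
      show "0 \<le> sqrt S"
        unfolding S_def using unit \<open>D \<noteq> {}\<close> by (simp add: max_correlation_nonneg)
    qed
    finally show ?thesis .
  qed
  ultimately show ?thesis
    unfolding S_def by (rule has_sum_le_finite_sums)
qed

lemma residual_excess_le_l1_max_correlation:
  fixes D :: "'a::real_inner set" and e phi psi :: "nat \<Rightarrow> 'a" and c :: "'a \<Rightarrow> nat \<Rightarrow> real"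
  assumes unit: "\<forall>w\<in>D. norm w = 1" and "D \<noteq> {}"
    and orth: "\<And>i. i < n \<Longrightarrow> inner (e i) (phi i) = (norm (e i))\<^sup>2"
    and rep: "\<And>i. i < n \<Longrightarrow> ((\<lambda>w. c w i *\<^sub>R w) has_sum psi i) D"
    and l1: "(\<Sum>\<^sub>\<infinity>w\<in>D. ennreal (sqrt (\<Sum>i<n. (c w i)\<^sup>2))) \<le> ennreal M" and "M \<ge> 0"
  shows "(\<Sum>i<n. (norm (e i))\<^sup>2) - (\<Sum>i<n. (norm (phi i - psi i))\<^sup>2)
           \<le> 2 * M * sqrt (max_correlation D n e)"
proof -
  have "(\<Sum>i<n. (norm (e i))\<^sup>2)
          = (\<Sum>i<n. inner (e i) (phi i - psi i)) + (\<Sum>i<n. inner (e i) (psi i))"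
    using orth by (simp add: inner_diff_right sum.distrib[symmetric])
  moreover have "2 * (\<Sum>i<n. inner (e i) (phi i - psi i))
                   \<le> (\<Sum>i<n. (norm (e i))\<^sup>2) + (\<Sum>i<n. (norm (phi i - psi i))\<^sup>2)"
    unfolding sum_distrib_left sum.distrib[symmetric] by (intro sum_mono two_inner_le_sum_squares)
  moreover have "(\<Sum>i<n. inner (e i) (psi i)) \<le> M * sqrt (max_correlation D n e)"
    using sum_inner_le_l1_max_correlation[OF unit \<open>D \<noteq> {}\<close> rep l1 \<open>M \<ge> 0\<close>] .
  ultimately show ?thesis by linarith
qed

definition omp_error :: "(nat \<Rightarrow> 'a::real_inner) \<Rightarrow> nat \<Rightarrow> 'a \<Rightarrow> 'a" where
  "omp_error om k x = x - orth_proj (omp_space om k) x"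

lemma omp_residual_omp_error: "omp_residual n phi om k = (\<Sum>i<n. (norm (omp_error om k (phi i)))\<^sup>2)"
  by (simp add: omp_residual_def omp_error_def)

lemma inner_omp_error_self: "inner (omp_error om k x) x = (norm (omp_error om k x))\<^sup>2"
proof -
  have "inner (omp_error om k x) (orth_proj (omp_space om k) x) = 0"
    unfolding omp_error_def omp_space_def by (intro orth_proj_orthogonal orth_proj_in_span) simp_all
  then show ?thesis
    by (simp add: omp_error_def inner_diff_right power2_norm_eq_inner)
qed

lemma collective_omp_step:
  assumes "collective_omp D \<kappa> n phi om"
  shows "om (Suc k) \<in> D"
    and "\<kappa>\<^sup>2 * max_correlation D n (\<lambda>i. omp_error om k (phi i))
           \<le> (\<Sum>i<n. (inner (omp_error om k (phi i)) (om (Suc k)))\<^sup>2)"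
  using assms[unfolded collective_omp_def, rule_format, of "Suc k"]
  by (simp_all add: max_correlation_def omp_error_def)

lemma omp_residual_Suc_le:
  fixes D :: "'a::real_inner set"
  assumes unit: "\<forall>w\<in>D. norm w = 1" and omp: "collective_omp D \<kappa> n phi om"
  shows "omp_residual n phi om (Suc k)
           \<le> omp_residual n phi om k - \<kappa>\<^sup>2 * max_correlation D n (\<lambda>i. omp_error om k (phi i))"
proof -
  let ?w = "om (Suc k)"
  have w_unit: "norm ?w = 1" using unit collective_omp_step(1)[OF omp] by blast
  have "(norm (omp_error om (Suc k) x))\<^sup>2
          \<le> (norm (omp_error om k x))\<^sup>2 - (inner (omp_error om k x) ?w)\<^sup>2" for x
  proof -
    let ?y = "orth_proj (omp_space om k) x + inner (omp_error om k x) ?w *\<^sub>R ?w"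
    have "span (om ` {1..k}) \<subseteq> omp_space om (Suc k)"
      unfolding omp_space_def by (intro span_mono) auto
    moreover have "?w \<in> omp_space om (Suc k)"
      unfolding omp_space_def by (intro span_base) auto
    ultimately have "?y \<in> omp_space om (Suc k)"
      using orth_proj_in_span[of "om ` {1..k}" x]
      unfolding omp_space_def by (intro span_add span_scale) auto
    then have "(norm (omp_error om (Suc k) x))\<^sup>2 \<le> (norm (x - ?y))\<^sup>2"
      unfolding omp_error_def omp_space_def by (intro orth_proj_span_dist_le) auto
    also have "x - ?y = omp_error om k x - inner (omp_error om k x) ?w *\<^sub>R ?w"
      by (simp add: omp_error_def)
    finally show ?thesis
      by (simp only: norm_diff_component_unit[OF w_unit])
  qed
  then have "omp_residual n phi om (Suc k)
               \<le> omp_residual n phi om k - (\<Sum>i<n. (inner (omp_error om k (phi i)) ?w)\<^sup>2)"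
    unfolding omp_residual_omp_error sum_subtractf[symmetric] by (intro sum_mono)
  then show ?thesis using collective_omp_step(2)[OF omp, of k] by linarith
qed

text \<open>For \<open>A > 0\<close> the step says \<open>a\<^sub>k\<^sub>+\<^sub>1 \<le> q(a\<^sub>k)\<close> with \<open>q(x) = x - x\<^sup>2/A\<close>, which is bounded by \<open>A/4\<close>
  and increasing on \<open>x \<le> A/2\<close>; this propagates \<open>a\<^sub>k\<^sub>+\<^sub>1 \<le> A/(k+2)\<close>.\<close>
lemma quadratic_recursion_decay:
  fixes a :: "nat \<Rightarrow> real"
  assumes "A \<ge> 0" and decr: "\<And>k. a (Suc k) \<le> a k"
    and step: "\<And>k. a k > 0 \<Longrightarrow> A * a (Suc k) \<le> A * a k - (a k)\<^sup>2"
  shows "a (Suc m) \<le> A / (real m + 2)"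
proof (cases "A = 0")
  case True
  have "a k \<le> 0" for k
  proof (rule ccontr)
    assume "\<not> a k \<le> 0"
    then show False using step[of k] True by simp
  qed
  then show ?thesis using True by simp
next
  case False
  with \<open>A \<ge> 0\<close> have "A > 0" by simp
  define q where "q x = x - x\<^sup>2 / A" for x
  have q_step: "a (Suc k) \<le> q (a k)" if "a k > 0" for k
    using step[OF that] \<open>A > 0\<close> by (simp add: q_def field_simps)
  have q_max: "q x \<le> A / 4" for x
  proof -
    have "0 \<le> (x - A / 2)\<^sup>2 / A" using \<open>A > 0\<close> by simp
    then show ?thesis using \<open>A > 0\<close> by (simp add: q_def field_simps power2_eq_square)
  qed
  have q_mono: "q x \<le> q t" if "x \<le> t" "2 * t \<le> A" for x t
  proof -
    have "q t - q x = (t - x) * (A - t - x) / A"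
      using \<open>A > 0\<close> by (simp add: q_def field_simps power2_eq_square)
    moreover have "0 \<le> (t - x) * (A - t - x) / A" using that \<open>A > 0\<close> by simp
    ultimately show ?thesis by simp
  qed
  have bound_nonneg: "0 \<le> A / (real k + 2)" for k
    using \<open>A > 0\<close> by simp
  show ?thesis
  proof (induction m)
    case 0
    show ?case
    proof (cases "a 1 > 0")
      case True
      then have "a 0 > 0" using decr[of 0] by simp
      then show ?thesis using q_step[of 0] q_max[of "a 0"] \<open>A > 0\<close> by simp
    qed (use bound_nonneg[of 0] in simp)
  next
    case (Suc m)
    show ?case
    proof (cases "a (Suc (Suc m)) > 0")
      case True
      then have "a (Suc m) > 0" using decr[of "Suc m"] by simp
      then have "a (Suc (Suc m)) \<le> q (A / (real m + 2))"
        using q_step[of "Suc m"] q_mono[OF Suc.IH] \<open>A > 0\<close> by (simp add: field_simps)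
      also have "\<dots> = A * ((real m + 1) / (real m + 2)\<^sup>2)"
        using \<open>A > 0\<close> by (simp add: q_def divide_simps power2_eq_square) (simp add: algebra_simps)
      also have "\<dots> \<le> A * (1 / (real m + 3))"
      proof (rule mult_left_mono)
        have "(real m + 1) * (real m + 3) \<le> (real m + 2)\<^sup>2"
          by (simp add: power2_eq_square algebra_simps)
        then show "(real m + 1) / (real m + 2)\<^sup>2 \<le> 1 / (real m + 3)"
          by (simp add: divide_simps)
      qed (use \<open>A > 0\<close> in simp)
      finally show ?thesis by (simp add: add.commute)
    qed (use bound_nonneg[of "Suc m"] in linarith)
  qed
qed

lemma omp_residual_le_of_representation:
  fixes D :: "'a::real_inner set" and c :: "'a \<Rightarrow> nat \<Rightarrow> real"
  assumes dict: "dictionary D" and "0 < \<kappa>" and omp: "collective_omp D \<kappa> n phi om"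
    and "m \<ge> 1"
    and rep: "\<And>i. i < n \<Longrightarrow> ((\<lambda>w. c w i *\<^sub>R w) has_sum psi i) D"
    and l1: "(\<Sum>\<^sub>\<infinity>w\<in>D. ennreal (sqrt (\<Sum>i<n. (c w i)\<^sup>2))) \<le> ennreal M" and "M \<ge> 0"
  shows "omp_residual n phi om m
           \<le> 4 * M\<^sup>2 / \<kappa>\<^sup>2 / real (m + 1) + (\<Sum>i<n. (norm (phi i - psi i))\<^sup>2)"
proof -
  have unit: "\<forall>w\<in>D. norm w = 1" using dict by (simp add: dictionary_def)
  have "D \<noteq> {}" using collective_omp_step(1)[OF omp] by blast
  define d where "d = (\<Sum>i<n. (norm (phi i - psi i))\<^sup>2)"
  define a where "a k = omp_residual n phi om k - d" for k
  define S where "S k = max_correlation D n (\<lambda>i. omp_error om k (phi i))" for k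
  define A where "A = 4 * M\<^sup>2 / \<kappa>\<^sup>2"
  have S_nonneg: "0 \<le> S k" for k
    unfolding S_def using unit \<open>D \<noteq> {}\<close> by (rule max_correlation_nonneg)
  have decrease: "a (Suc k) \<le> a k - \<kappa>\<^sup>2 * S k" for k
    using omp_residual_Suc_le[OF unit omp] unfolding a_def S_def by simp
  have excess: "a k \<le> 2 * M * sqrt (S k)" for k
    using residual_excess_le_l1_max_correlation[OF unit \<open>D \<noteq> {}\<close> _ rep l1 \<open>M \<ge> 0\<close>]
    unfolding a_def S_def d_def omp_residual_omp_error by (simp add: inner_omp_error_self)
  have step: "A * a (Suc k) \<le> A * a k - (a k)\<^sup>2" if "a k > 0" for k
  proof -
    have "(a k)\<^sup>2 \<le> (2 * M * sqrt (S k))\<^sup>2"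
      using excess[of k] that by (intro power_mono) auto
    also have "\<dots> = A * \<kappa>\<^sup>2 * S k"
      using S_nonneg[of k] \<open>0 < \<kappa>\<close> by (simp add: A_def power_mult_distrib)
    finally have "(a k)\<^sup>2 \<le> A * (\<kappa>\<^sup>2 * S k)" by simp
    moreover have "A * a (Suc k) \<le> A * (a k - \<kappa>\<^sup>2 * S k)"
      using decrease[of k] by (intro mult_left_mono) (simp_all add: A_def)
    ultimately show ?thesis by (simp add: algebra_simps)
  qed
  have "a (Suc k) \<le> a k" for k
    using decrease[of k] mult_nonneg_nonneg[OF zero_le_power2 S_nonneg, of \<kappa> k] by linarith
  then have "a (Suc (m - 1)) \<le> A / (real (m - 1) + 2)"
    using step by (intro quadratic_recursion_decay) (simp_all add: A_def)
  then show ?thesis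
    using \<open>m \<ge> 1\<close> unfolding a_def A_def d_def by (simp add: of_nat_diff add.commute)
qed

lemma omp_residual_le_of_l1_dict_norm_less:
  fixes D :: "'a::real_inner set"
  assumes "dictionary D" and "0 < \<kappa>" and "collective_omp D \<kappa> n phi om" and "m \<ge> 1"
    and "l1_dict_norm D n psi < ennreal M"
  shows "omp_residual n phi om m
           \<le> 4 * M\<^sup>2 / \<kappa>\<^sup>2 / real (m + 1) + (\<Sum>i<n. (norm (phi i - psi i))\<^sup>2)"
proof -
  obtain c where rep: "\<forall>i<n. ((\<lambda>w. c w i *\<^sub>R w) has_sum psi i) D"
    and l1: "(\<Sum>\<^sub>\<infinity>w\<in>D. ennreal (sqrt (\<Sum>i<n. (c w i)\<^sup>2))) < ennreal M"
    using assms(5) unfolding l1_dict_norm_def Inf_less_iff by blast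
  have "0 < ennreal M" using l1 by (rule order.strict_trans1[OF zero_le])
  then have "0 \<le> M" by (simp add: ennreal_less_zero_iff)
  with rep l1 show ?thesis
    by (intro omp_residual_le_of_representation[OF assms(1-4), of c]) simp_all
qed

theorem theorem2:
  fixes D :: "'a::{real_inner, complete_space} set"
    and n :: nat and phi psi om :: "nat \<Rightarrow> 'a" and \<kappa> :: real and m :: nat
  assumes "dictionary D"
    and "\<forall>i<n. \<forall>j<n. inner (phi i) (phi j) = (if i = j then 1 else 0)"
    and "0 < \<kappa>" and "\<kappa> < 1"
    and "collective_omp D \<kappa> n phi om"
    and "l1_dict_norm D n psi < top"
    and "m \<ge> 1"
  shows "omp_residual n phi om m
           \<le> 4 * (enn2real (l1_dict_norm D n psi))\<^sup>2 / \<kappa>\<^sup>2 / real (m + 1)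
             + (\<Sum>i<n. (norm (phi i - psi i))\<^sup>2)"
proof -
  define x where "x = enn2real (l1_dict_norm D n psi)"
  define f where "f M = 4 * M\<^sup>2 / \<kappa>\<^sup>2 / real (m + 1) + (\<Sum>i<n. (norm (phi i - psi i))\<^sup>2)" for M
  have "0 \<le> x" unfolding x_def by simp
  have norm_eq: "l1_dict_norm D n psi = ennreal x"
    using assms(6) unfolding x_def by simp
  have "\<forall>\<^sub>F M in at_right x. omp_residual n phi om m \<le> f M"
    using eventually_at_right_less[of x]
  proof (rule eventually_mono)
    fix M assume "x < M"
    then have "l1_dict_norm D n psi < ennreal M"
      using \<open>0 \<le> x\<close> by (simp add: norm_eq ennreal_lessI)
    then show "omp_residual n phi om m \<le> f M"
      unfolding f_def by (rule omp_residual_le_of_l1_dict_norm_less[OF assms(1,3,5,7)])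
  qed
  moreover have "(f \<longlongrightarrow> f x) (at_right x)"
    unfolding f_def by (intro tendsto_intros) (use \<open>0 < \<kappa>\<close> in auto)
  ultimately have "omp_residual n phi om m \<le> f x"
    using tendsto_lowerbound trivial_limit_at_right_real by metis
  then show ?thesis unfolding f_def x_def .
qed

end
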